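(* Let $m,n,a$ be natural numbers with $m\geq 2$, $1\leq a\leq 9$ and $a\neq 6$. Then the equation $$B_n = a\left(\frac{10^m-1}{9}\right)$$ has no solution. That is, no balancing number is a decimal repdigit with at least two digits whose repeated digit differs from $6$.
   Context: The balancing sequence $(B_n)_{n\geq 0}$ is defined by $B_0=0$, $B_1=1$ and $B_{n+1}=6B_n-B_{n-1}$ for $n\geq 1$. For $1\le a\le 9$ and $m\ge 1$, the number $a\frac{10^m-1}{9}$ is the decimal integer consisting of $m$ copies of the digit $a$. *)

theory Defs
  imports Main
begin

fun balancing :: "nat \<Rightarrow> int" where
  "balancing 0 = 0"
| "balancing (Suc 0) = 1"
| "balancing (Suc (Suc n)) = 6 * balancing (Suc n) - balancing n"

end

theory Submission
  imports Defs
begin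

text \<open>Work modulo 1100 = 4 \<cdot> 25 \<cdot> 11. A repdigit with m \<ge> 2 digits d is congruent to 11d or
  111d according to the parity of m, while the pairs (B n, B (n+1)) modulo 1100 run through a
  cycle of length 60 that can be listed explicitly; among its 60 residues the only repdigit
  residue is 666.\<close>

definition balancing_step :: "int \<Rightarrow> int \<times> int \<Rightarrow> int \<times> int" where
  "balancing_step M p = (snd p, (6 * snd p - fst p) mod M)"

lemma balancing_pair_mod_in_invariant:
  assumes init: "(0, 1 mod M) \<in> S"
    and closed: "\<And>p. p \<in> S \<Longrightarrow> balancing_step M p \<in> S"
  shows "(balancing n mod M, balancing (Suc n) mod M) \<in> S"
proof (induction n)
  case 0
  show ?case using init by simp
next
  case (Suc n)
  have "balancing (Suc (Suc n)) mod M
      = (6 * (balancing (Suc n) mod M) - balancing n mod M) mod M"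
    by (simp, metis mod_diff_left_eq mod_diff_right_eq mod_mult_right_eq)
  then show ?case
    using closed[OF Suc.IH] by (simp add: balancing_step_def)
qed

definition balancing_cycle_mod_1100 :: "(int \<times> int) list" where
  "balancing_cycle_mod_1100 = [(0,1), (1,6), (6,35), (35,204), (204,89), (89,330), (330,791),
    (791,16), (16,405), (405,214), (214,879), (879,660), (660,881), (881,226), (226,475),
    (475,424), (424,969), (969,990), (990,571), (571,236), (236,845), (845,434), (434,659),
    (659,220), (220,661), (661,446), (446,915), (915,644), (644,749), (749,550), (550,351),
    (351,456), (456,185), (185,654), (654,439), (439,880), (880,441), (441,666), (666,255),
    (255,864), (864,529), (529,110), (110,131), (131,676), (676,625), (625,874), (874,219),
    (219,440), (440,221), (221,886), (886,695), (695,1084), (1084,309), (309,770), (770,1011),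
    (1011,896), (896,1065), (1065,1094), (1094,1099), (1099,0)]"

lemma balancing_cycle_mod_1100_closed:
  "list_all (\<lambda>p. balancing_step 1100 p \<in> set balancing_cycle_mod_1100) balancing_cycle_mod_1100"
  unfolding balancing_cycle_mod_1100_def balancing_step_def by code_simp

lemma balancing_pair_mod_1100:
  "(balancing n mod 1100, balancing (Suc n) mod 1100) \<in> set balancing_cycle_mod_1100"
proof (rule balancing_pair_mod_in_invariant)
  show "(0, 1 mod 1100) \<in> set balancing_cycle_mod_1100"
    by (simp add: balancing_cycle_mod_1100_def)
  show "balancing_step 1100 p \<in> set balancing_cycle_mod_1100"
    if "p \<in> set balancing_cycle_mod_1100" for p
    using balancing_cycle_mod_1100_closed that by (simp add: list_all_iff)
qed

definition repdigit_residues_mod_1100 :: "int set" where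
  "repdigit_residues_mod_1100 = (\<lambda>(c, d). c * d) ` ({11, 111} \<times> {1, 2, 3, 4, 5, 7, 8, 9})"

lemma balancing_mod_1100_not_repdigit:
  "balancing n mod 1100 \<notin> repdigit_residues_mod_1100"
proof -
  have "list_all (\<lambda>p. fst p \<notin> repdigit_residues_mod_1100) balancing_cycle_mod_1100"
    unfolding balancing_cycle_mod_1100_def repdigit_residues_mod_1100_def by code_simp
  then show ?thesis
    using balancing_pair_mod_1100[of n] by (fastforce simp: list_all_iff)
qed

lemma repunit_eq_sum: "((10::int) ^ m - 1) div 9 = (\<Sum>i<m. 10 ^ i)"
  using power_diff_1_eq[of "10::int" m] by simp

lemma repunit_Suc: "((10::int) ^ Suc m - 1) div 9 = 10 * ((10 ^ m - 1) div 9) + 1"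
  unfolding repunit_eq_sum sum.lessThan_Suc_shift by (simp add: sum_distrib_left)

lemma repunit_mod_1100:
  assumes "m \<ge> 2"
  shows "((10::int) ^ m - 1) div 9 mod 1100 = (if even m then 11 else 111)"
  using assms
proof (induction m rule: nat_induct_at_least)
  case base
  show ?case by simp
next
  case (Suc m)
  have "((10::int) ^ Suc m - 1) div 9 mod 1100
      = (10 * (((10::int) ^ m - 1) div 9 mod 1100) + 1) mod 1100"
    unfolding repunit_Suc by (metis mod_add_left_eq mod_mult_right_eq)
  then show ?case using Suc.IH by simp
qed

theorem theorem1:
  fixes m n a :: nat
  assumes "m \<ge> 2" and "1 \<le> a" and "a \<le> 9" and "a \<noteq> 6"
  shows "balancing n \<noteq> int a * ((10 ^ m - 1) div 9)"
proof
  assume repdigit: "balancing n = int a * ((10 ^ m - 1) div 9)"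
  have "balancing n mod 1100 = (int a * (((10::int) ^ m - 1) div 9 mod 1100)) mod 1100"
    unfolding repdigit by (simp add: mod_mult_right_eq)
  moreover have "a \<in> {1, 2, 3, 4, 5, 7, 8, 9}"
    using assms(2-4) by auto
  ultimately have "balancing n mod 1100 \<in> repdigit_residues_mod_1100"
    unfolding repunit_mod_1100[OF assms(1)] repdigit_residues_mod_1100_def by auto
  then show False
    using balancing_mod_1100_not_repdigit by blast
qed

end
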